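(* Let $p>0$, $N\ge 2$, $1\le K\le N-1$, and let $\alpha_1,\dots,\alpha_N>0$ satisfy $$\sum_{j=1}^K\alpha_j^{-2/p}=\sum_{j=K+1}^N\alpha_j^{-2/p}.$$ Then there exists a one-parameter family of solutions $\Phi=(\phi_1,\dots,\phi_N)^T\in H^2_\Gamma$ of the stationary NLS equation $$-\phi_j''+\phi_j-(p+1)\alpha_j^2|\phi_j|^{2p}\phi_j=0\ \text{ on }\mathbb{R}^+,\quad j=1,\dots,N,$$ given by $$\phi_j(x)=\begin{cases}\alpha_j^{-1/p}\phi(x+a),& j=1,\dots,K,\\ \alpha_j^{-1/p}\phi(x-a),& j=K+1,\dots,N,\end{cases}$$ where $\phi(x)=\operatorname{sech}^{1/p}(px)$ and $a\in\mathbb{R}$ is arbitrary.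
   Context: $\Gamma$ is a star graph of $N$ half-lines $\mathbb{R}^+$ joined at the vertex $x=0$. $H^1_\Gamma=\{\Psi\in\oplus_{j=1}^NH^1(\mathbb{R}^+):\alpha_1^{1/p}\psi_1(0)=\dots=\alpha_N^{1/p}\psi_N(0)\}$ and $H^2_\Gamma=\{\Psi\in\oplus_{j=1}^NH^2(\mathbb{R}^+)\cap H^1_\Gamma:\sum_{j=1}^N\alpha_j^{-1/p}\psi_j'(0)=0\}$ (one-sided values at $x=0$). *)

theory Defs
  imports "HOL-Analysis.Analysis"
begin

definition test_fun :: "(real \<Rightarrow> real) \<Rightarrow> bool" where
  "test_fun \<psi> \<longleftrightarrow>
     (\<forall>n x. ((deriv ^^ n) \<psi>) differentiable (at x)) \<and>
     (\<exists>K. compact K \<and> K \<subseteq> {0<..} \<and> (\<forall>x. x \<notin> K \<longrightarrow> \<psi> x = 0))"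

definition L2_half :: "(real \<Rightarrow> real) \<Rightarrow> bool" where
  "L2_half f \<longleftrightarrow>
     (\<lambda>x. indicator {0<..} x * f x) \<in> borel_measurable lborel \<and>
     set_integrable lborel {0<..} (\<lambda>x. (f x)\<^sup>2)"

definition weak_deriv :: "(real \<Rightarrow> real) \<Rightarrow> (real \<Rightarrow> real) \<Rightarrow> bool" where
  "weak_deriv f g \<longleftrightarrow>
     (\<forall>\<psi>. test_fun \<psi> \<longrightarrow>
        (LINT x:{0<..}|lborel. f x * deriv \<psi> x) = - (LINT x:{0<..}|lborel. g x * \<psi> x))"

definition H1_half :: "(real \<Rightarrow> real) \<Rightarrow> bool" where
  "H1_half f \<longleftrightarrow> L2_half f \<and> (\<exists>g. L2_half g \<and> weak_deriv f g)"

definition H2_half :: "(real \<Rightarrow> real) \<Rightarrow> bool" where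
  "H2_half f \<longleftrightarrow> L2_half f \<and> (\<exists>g. H1_half g \<and> weak_deriv f g)"

definition trace0 :: "(real \<Rightarrow> real) \<Rightarrow> real \<Rightarrow> bool" where
  "trace0 f c \<longleftrightarrow>
     (\<exists>h. continuous_on {0..} h \<and> (AE x in lborel. x > 0 \<longrightarrow> h x = f x) \<and> h 0 = c)"

text \<open>The space H^1_Gamma on the star graph with N half-lines (edges indexed 1..N).\<close>
definition H1_Gamma :: "nat \<Rightarrow> real \<Rightarrow> (nat \<Rightarrow> real) \<Rightarrow> (nat \<Rightarrow> real \<Rightarrow> real) \<Rightarrow> bool" where
  "H1_Gamma N p \<alpha> \<Psi> \<longleftrightarrow>
     (\<forall>j\<in>{1..N}. H1_half (\<Psi> j)) \<and>
     (\<exists>v. \<forall>j\<in>{1..N}. \<exists>c. trace0 (\<Psi> j) c \<and> \<alpha> j powr (1/p) * c = v)"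

definition H2_Gamma :: "nat \<Rightarrow> real \<Rightarrow> (nat \<Rightarrow> real) \<Rightarrow> (nat \<Rightarrow> real \<Rightarrow> real) \<Rightarrow> bool" where
  "H2_Gamma N p \<alpha> \<Psi> \<longleftrightarrow>
     (\<forall>j\<in>{1..N}. H2_half (\<Psi> j)) \<and> H1_Gamma N p \<alpha> \<Psi> \<and>
     (\<exists>d c. (\<forall>j\<in>{1..N}. weak_deriv (\<Psi> j) (d j) \<and> H1_half (d j) \<and> trace0 (d j) (c j)) \<and>
            (\<Sum>j=1..N. \<alpha> j powr (-1/p) * c j) = 0)"

definition solves_NLS :: "real \<Rightarrow> real \<Rightarrow> (real \<Rightarrow> real) \<Rightarrow> bool" where
  "solves_NLS p a u \<longleftrightarrow>
     (\<exists>d1 d2. \<forall>x>0. (u has_real_derivative d1 x) (at x) \<and> (d1 has_real_derivative d2 x) (at x) \<and>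
        - d2 x + u x - (p + 1) * a\<^sup>2 * \<bar>u x\<bar> powr (2 * p) * u x = 0)"

definition phi0 :: "real \<Rightarrow> real \<Rightarrow> real" where
  "phi0 p x = (1 / cosh (p * x)) powr (1 / p)"

end

theory Submission
  imports Defs
begin

text \<open>The profile \<open>\<phi> = sech(p x)^(1/p)\<close> satisfies \<open>\<phi>'' = \<phi> - (p+1) \<phi>^(2p+1)\<close> and, together
  with its first two derivatives, decays like \<open>e^(-|x|)\<close>; hence every scaled and shifted copy
  \<open>\<alpha>\<^sub>j^(-1/p) \<phi>(x \<plusminus> a)\<close> is an \<open>H\<^sup>2\<close> solution of the NLS equation on its edge. Since \<open>\<phi>\<close> is even, the
  weighted vertex values \<open>\<alpha>\<^sub>j^(1/p) \<phi>\<^sub>j(0) = \<phi>(\<plusminus>a)\<close> all agree; since \<open>\<phi>'\<close> is odd, the weighted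
  vertex derivatives are \<open>\<plusminus>\<alpha>\<^sub>j^(-2/p) \<phi>'(a)\<close>, so the Kirchhoff sum vanishes exactly by the
  balance condition on the \<open>\<alpha>\<^sub>j\<close>.\<close>

lemma set_integrable_exp_minus_Ioi: "set_integrable lborel {0<..} (\<lambda>x::real. exp (- x))"
proof -
  have "(\<lambda>x::real. exp (- 1 * x)) absolutely_integrable_on {0..}"
    by (intro nonnegative_absolutely_integrable_1 integrable_on_exp_minus_to_infinity) auto
  then have "set_integrable lborel {0..} (\<lambda>x::real. exp (- x))"
    unfolding set_integrable_def
    by (subst (asm) integrable_completion)
       (auto intro!: borel_measurable_continuous_on_indicator continuous_intros)
  then show ?thesis
    by (rule set_integrable_subset) auto
qed

lemma L2_half_if_exp_decay:
  assumes cont: "continuous_on UNIV f" and decay: "\<And>x. x > 0 \<Longrightarrow> \<bar>f x\<bar> \<le> C * exp (- x)"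
  shows "L2_half f"
proof -
  have [measurable]: "f \<in> borel_measurable borel"
    using cont by (rule borel_measurable_continuous_onI)
  have square_le: "(f x)\<^sup>2 \<le> C\<^sup>2 * exp (- x)" if "x > 0" for x
  proof -
    have "(f x)\<^sup>2 \<le> (C * exp (- x))\<^sup>2"
      using decay[OF that] by (metis abs_le_square_iff abs_of_nonneg abs_ge_zero order_trans)
    also have "\<dots> = C\<^sup>2 * exp (- x) * exp (- x)"
      by (simp add: power2_eq_square)
    also have "\<dots> \<le> C\<^sup>2 * exp (- x)"
      using that by (intro mult_left_le) auto
    finally show ?thesis .
  qed
  have "integrable lborel (\<lambda>x. indicator {0<..} x *\<^sub>R (C\<^sup>2 * exp (- x)))"
    using set_integrable_mult_right[OF set_integrable_exp_minus_Ioi, of "C\<^sup>2"]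
    unfolding set_integrable_def by simp
  then have "set_integrable lborel {0<..} (\<lambda>x. (f x)\<^sup>2)"
    unfolding set_integrable_def
    by (rule Bochner_Integration.integrable_bound) (auto simp: indicator_def square_le)
  then show ?thesis
    unfolding L2_half_def by simp
qed

lemma test_fun_has_real_derivative:
  assumes "test_fun \<psi>"
  shows "(\<psi> has_real_derivative deriv \<psi> x) (at x)" and "isCont (deriv \<psi>) x"
proof -
  have "((deriv ^^ 0) \<psi>) differentiable (at x)" "((deriv ^^ 1) \<psi>) differentiable (at x)"
    using assms unfolding test_fun_def by blast+
  then show "(\<psi> has_real_derivative deriv \<psi> x) (at x)" "isCont (deriv \<psi>) x"
    by (simp_all add: DERIV_deriv_iff_real_differentiable differentiable_imp_continuous_within)
qed

lemma test_fun_support_in_interval: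
  assumes "test_fun \<psi>"
  obtains l u where "0 < l" "l \<le> u" "\<And>x. x \<notin> {l<..<u} \<Longrightarrow> \<psi> x = 0 \<and> deriv \<psi> x = 0"
proof -
  obtain K where K: "compact K" "K \<subseteq> {0<..}" "\<And>x. x \<notin> K \<Longrightarrow> \<psi> x = 0"
    using assms unfolding test_fun_def by blast
  have "compact (insert 1 K)" \<comment> \<open>adding a point avoids a case split on \<open>K = {}\<close>\<close>
    using K(1) by simp
  then obtain m M where m: "m \<in> insert 1 K" "\<And>t. t \<in> insert 1 K \<Longrightarrow> m \<le> t"
    and M: "\<And>t. t \<in> insert 1 K \<Longrightarrow> t \<le> M"
    by (metis compact_attains_inf compact_attains_sup insert_not_empty)
  have "m > 0"
    using m(1) K(2) by auto
  have outside: "x \<notin> K" if "x \<notin> {m/2<..<M+1}" for x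
    using that m(2)[of x] M[of x] \<open>m > 0\<close> by auto
  have deriv_zero: "deriv \<psi> x = 0" if "x \<notin> K" for x
  proof -
    have "(\<psi> has_real_derivative 0) (at x)"
      by (rule has_field_derivative_transform_within_open[where f="\<lambda>_. 0" and S="- K"])
         (use K that compact_imp_closed in auto)
    then show ?thesis
      using test_fun_has_real_derivative(1)[OF assms] DERIV_unique by blast
  qed
  have "m/2 \<le> M+1"
    using m(2)[of 1] M[of 1] \<open>m > 0\<close> by simp
  then show ?thesis
    by (intro that[of "m/2" "M+1"]) (use outside K(3) deriv_zero \<open>m > 0\<close> in auto)
qed

lemma set_integral_Ioi_eq_integral:
  fixes g :: "real \<Rightarrow> real"
  assumes "continuous_on UNIV g" "0 < l" "\<And>x. x \<notin> {l..u} \<Longrightarrow> g x = 0"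
  shows "(LINT x:{0<..}|lborel. g x) = integral {l..u} g"
proof -
  have "(\<lambda>x. indicator {0<..} x *\<^sub>R g x) = (\<lambda>x. indicator {l..u} x *\<^sub>R g x)"
    using assms(2,3) by (auto simp: indicator_def fun_eq_iff)
  moreover have "set_integrable lborel {l..u} g"
    unfolding set_integrable_def
    by (rule borel_integrable_compact) (auto intro: continuous_on_subset[OF assms(1)])
  ultimately show ?thesis
    using set_borel_integral_eq_integral unfolding set_lebesgue_integral_def by metis
qed

lemma weak_deriv_if_has_real_derivative:
  assumes deriv_f: "\<And>x. (f has_real_derivative f' x) (at x)" and cont_f': "continuous_on UNIV f'"
  shows "weak_deriv f f'"
  unfolding weak_deriv_def
proof (intro allI impI)
  fix \<psi> assume test: "test_fun \<psi>"
  obtain l u where lu: "0 < l" "l \<le> u" "\<And>x. x \<notin> {l<..<u} \<Longrightarrow> \<psi> x = 0 \<and> deriv \<psi> x = 0"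
    using test_fun_support_in_interval[OF test] by blast
  note deriv_\<psi> = test_fun_has_real_derivative[OF test]
  have cont_f: "continuous_on UNIV f"
    using deriv_f by (meson DERIV_isCont continuous_at_imp_continuous_on)
  have cont_\<psi>: "continuous_on UNIV \<psi>"
    using deriv_\<psi>(1) by (meson DERIV_isCont continuous_at_imp_continuous_on)
  have cont_d\<psi>: "continuous_on UNIV (deriv \<psi>)"
    using deriv_\<psi>(2) by (simp add: continuous_at_imp_continuous_on)
  have cont1: "continuous_on UNIV (\<lambda>x. f x * deriv \<psi> x)"
    and cont2: "continuous_on UNIV (\<lambda>x. f' x * \<psi> x)"
    by (intro continuous_intros cont_f cont_f' cont_\<psi> cont_d\<psi>)+
  have "((\<lambda>x. f' x * \<psi> x + f x * deriv \<psi> x) has_integral (f u * \<psi> u - f l * \<psi> l)) {l..u}"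
  proof (rule fundamental_theorem_of_calculus[OF lu(2)])
    fix x
    have "((\<lambda>x. f x * \<psi> x) has_real_derivative f' x * \<psi> x + f x * deriv \<psi> x) (at x)"
      using DERIV_mult[OF deriv_f deriv_\<psi>(1)] by (simp add: mult.commute)
    then show "((\<lambda>x. f x * \<psi> x) has_vector_derivative f' x * \<psi> x + f x * deriv \<psi> x)
        (at x within {l..u})"
      by (simp add: has_real_derivative_iff_has_vector_derivative has_vector_derivative_at_within)
  qed
  moreover have "\<psi> l = 0" "\<psi> u = 0"
    using lu(3) by auto
  ultimately have "integral {l..u} (\<lambda>x. f' x * \<psi> x + f x * deriv \<psi> x) = 0"
    by (simp add: integral_unique)
  then have "integral {l..u} (\<lambda>x. f' x * \<psi> x) + integral {l..u} (\<lambda>x. f x * deriv \<psi> x) = 0"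
    by (subst integral_add[symmetric])
       (auto intro!: integrable_continuous_interval continuous_on_subset[OF cont1]
         continuous_on_subset[OF cont2])
  moreover have "(LINT x:{0<..}|lborel. f x * deriv \<psi> x) = integral {l..u} (\<lambda>x. f x * deriv \<psi> x)"
    and "(LINT x:{0<..}|lborel. f' x * \<psi> x) = integral {l..u} (\<lambda>x. f' x * \<psi> x)"
    by (rule set_integral_Ioi_eq_integral[OF _ lu(1)]; use cont1 cont2 lu(3) in force)+
  ultimately show "(LINT x:{0<..}|lborel. f x * deriv \<psi> x) = - (LINT x:{0<..}|lborel. f' x * \<psi> x)"
    by linarith
qed

lemma H2_half_if_exp_decay:
  assumes deriv_f: "\<And>x. (f has_real_derivative f' x) (at x)"
    and deriv_f': "\<And>x. (f' has_real_derivative f'' x) (at x)"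
    and cont_f'': "continuous_on UNIV f''"
    and decay: "\<And>x. x > 0 \<Longrightarrow> \<bar>f x\<bar> \<le> C * exp (- x) \<and> \<bar>f' x\<bar> \<le> C * exp (- x) \<and> \<bar>f'' x\<bar> \<le> C * exp (- x)"
  shows "H2_half f" and "weak_deriv f f'" and "H1_half f'"
proof -
  have cont_f: "continuous_on UNIV f" and cont_f': "continuous_on UNIV f'"
    using deriv_f deriv_f' by (meson DERIV_isCont continuous_at_imp_continuous_on)+
  show weak_f: "weak_deriv f f'"
    by (rule weak_deriv_if_has_real_derivative[OF deriv_f cont_f'])
  show H1: "H1_half f'"
    unfolding H1_half_def
    using L2_half_if_exp_decay[OF cont_f'] L2_half_if_exp_decay[OF cont_f'']
      weak_deriv_if_has_real_derivative[OF deriv_f' cont_f''] decay by blast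
  show "H2_half f"
    unfolding H2_half_def using L2_half_if_exp_decay[OF cont_f] decay weak_f H1 by blast
qed

lemma H2_half_imp_H1_half: "H2_half f \<Longrightarrow> H1_half f"
  unfolding H2_half_def H1_half_def by blast

lemma trace0_continuous: "continuous_on UNIV f \<Longrightarrow> trace0 f (f 0)"
  unfolding trace0_def by (intro exI[of _ f]) (auto intro: continuous_on_subset)

lemma one_minus_tanh_square: "1 - tanh (y::real) ^ 2 = 1 / cosh y ^ 2"
proof -
  have "1 - tanh y ^ 2 = (cosh y ^ 2 - sinh y ^ 2) / cosh y ^ 2"
    unfolding tanh_def by (simp add: field_simps power_divide)
  then show ?thesis
    using hyperbolic_pythagoras[of y] by simp
qed

definition phi0' :: "real \<Rightarrow> real \<Rightarrow> real" where
  "phi0' p x = - phi0 p x * tanh (p * x)"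

definition phi0'' :: "real \<Rightarrow> real \<Rightarrow> real" where
  "phi0'' p x = phi0 p x * (1 - (p + 1) / cosh (p * x) ^ 2)"

lemma phi0_eq_exp: "phi0 p x = exp (- ln (cosh (p * x)) / p)"
  unfolding phi0_def powr_def by (simp add: ln_div)

lemma phi0_pos: "phi0 p x > 0"
  unfolding phi0_eq_exp by simp

lemma phi0_minus: "phi0 p (- x) = phi0 p x"
  unfolding phi0_def by simp

lemma phi0'_minus: "phi0' p (- x) = - phi0' p x"
  unfolding phi0'_def phi0_minus by simp

lemma has_real_derivative_phi0:
  assumes "p \<noteq> 0"
  shows "(phi0 p has_real_derivative phi0' p x) (at x)"
proof -
  have "((\<lambda>x. exp (- ln (cosh (p * x)) / p)) has_real_derivative
      exp (- ln (cosh (p * x)) / p) * (- (sinh (p * x) * p / cosh (p * x)) / p)) (at x)"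
    by (auto intro!: derivative_eq_intros)
  then show ?thesis
    using assms unfolding phi0'_def phi0_eq_exp[abs_def] tanh_def by simp
qed

lemma has_real_derivative_phi0':
  assumes "p \<noteq> 0"
  shows "(phi0' p has_real_derivative phi0'' p x) (at x)"
proof -
  have sech_square: "(p + 1) / cosh (p * x) ^ 2 = (p + 1) * (1 - tanh (p * x) ^ 2)"
    by (simp add: one_minus_tanh_square)
  have "((\<lambda>x. - phi0 p x * tanh (p * x)) has_real_derivative
      - (phi0' p x * tanh (p * x) + phi0 p x * ((1 - tanh (p * x) ^ 2) * p))) (at x)"
    by (auto intro!: derivative_eq_intros has_real_derivative_phi0[OF assms])
  moreover have "- (phi0' p x * tanh (p * x) + phi0 p x * ((1 - tanh (p * x) ^ 2) * p)) = phi0'' p x"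
    unfolding phi0'_def phi0''_def sech_square by (simp add: algebra_simps power2_eq_square)
  ultimately show ?thesis
    unfolding phi0'_def[abs_def] by simp
qed

lemma continuous_on_phi0: "p \<noteq> 0 \<Longrightarrow> continuous_on UNIV (phi0 p)"
  using has_real_derivative_phi0 by (meson DERIV_isCont continuous_at_imp_continuous_on)

lemma continuous_on_phi0': "p \<noteq> 0 \<Longrightarrow> continuous_on UNIV (phi0' p)"
  using has_real_derivative_phi0' by (meson DERIV_isCont continuous_at_imp_continuous_on)

lemma continuous_on_phi0'': "p \<noteq> 0 \<Longrightarrow> continuous_on UNIV (phi0'' p)"
  unfolding phi0''_def[abs_def] by (intro continuous_intros continuous_on_phi0) auto

lemma phi0_powr_2p:
  assumes "p \<noteq> 0"
  shows "phi0 p x powr (2 * p) = 1 / cosh (p * x) ^ 2"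
proof -
  have "phi0 p x powr (2 * p) = (1 / cosh (p * x)) powr 2"
    unfolding phi0_def using assms by (simp add: powr_powr)
  then show ?thesis
    by (simp add: powr_realpow power_divide)
qed

lemma phi0''_eq:
  assumes "p \<noteq> 0"
  shows "phi0'' p x = phi0 p x - (p + 1) * phi0 p x powr (2 * p) * phi0 p x"
  unfolding phi0''_def phi0_powr_2p[OF assms] by (simp add: algebra_simps)

lemma phi0_le_exp:
  assumes "p > 0"
  shows "phi0 p x \<le> exp (ln 2 / p - \<bar>x\<bar>)"
proof -
  have "exp (p * \<bar>x\<bar>) \<le> exp (p * x) + exp (- (p * x))"
    using exp_gt_zero[of "p * x"] exp_gt_zero[of "- (p * x)"] by (cases "x \<ge> 0") simp_all
  then have "exp (p * \<bar>x\<bar>) / 2 \<le> cosh (p * x)"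
    unfolding cosh_def by simp
  then have "ln (exp (p * \<bar>x\<bar>) / 2) \<le> ln (cosh (p * x))"
    by (subst ln_le_cancel_iff) auto
  then have "p * \<bar>x\<bar> - ln 2 \<le> ln (cosh (p * x))"
    by (simp add: ln_div)
  then have "- ln (cosh (p * x)) / p \<le> ln 2 / p - \<bar>x\<bar>"
    using assms by (simp add: field_simps)
  then show ?thesis
    unfolding phi0_eq_exp by simp
qed

lemma abs_phi0'_le: "\<bar>phi0' p x\<bar> \<le> phi0 p x"
proof -
  have "\<bar>tanh (p * x)\<bar> \<le> 1"
    using tanh_real_bounds[of "p * x"] by auto
  then show ?thesis
    unfolding phi0'_def using phi0_pos[of p x] by (simp add: abs_mult mult_left_le)
qed

lemma abs_phi0''_le:
  assumes "p \<ge> 0"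
  shows "\<bar>phi0'' p x\<bar> \<le> (1 + p) * phi0 p x"
proof -
  have "1 \<le> cosh (p * x) ^ 2"
    using cosh_real_ge_1[of "p * x"] by (simp add: one_le_power)
  then have "(p + 1) * (1 / cosh (p * x) ^ 2) \<le> p + 1"
    using assms by (intro mult_left_le) auto
  then have "0 \<le> (p + 1) / cosh (p * x) ^ 2" "(p + 1) / cosh (p * x) ^ 2 \<le> p + 1"
    using assms by simp_all
  then have "\<bar>1 - (p + 1) / cosh (p * x) ^ 2\<bar> \<le> 1 + p"
    using assms by linarith
  then show ?thesis
    unfolding phi0''_def using phi0_pos[of p x] by (simp add: abs_mult mult.commute mult_right_mono)
qed

lemma has_real_derivative_scaled_shift:
  fixes f f' :: "real \<Rightarrow> real"
  assumes "(f has_real_derivative f' (x + s)) (at (x + s))"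
  shows "((\<lambda>x. c * f (x + s)) has_real_derivative c * f' (x + s)) (at x)"
  using DERIV_cmult[OF DERIV_shift[THEN iffD1, OF assms]] by simp

lemma continuous_on_scaled_shift:
  fixes f :: "real \<Rightarrow> real"
  assumes "continuous_on UNIV f"
  shows "continuous_on UNIV (\<lambda>x. c * f (x + s))"
proof -
  have "continuous_on UNIV (\<lambda>x. f (x + s))"
    by (rule continuous_on_compose2[OF assms]) (auto intro!: continuous_intros)
  then show ?thesis
    by (intro continuous_intros)
qed

lemma scaled_shifted_phi0_H2_half:
  assumes "p > 0"
  shows "H2_half (\<lambda>x. c * phi0 p (x + s))"
    and "weak_deriv (\<lambda>x. c * phi0 p (x + s)) (\<lambda>x. c * phi0' p (x + s))"
    and "H1_half (\<lambda>x. c * phi0' p (x + s))"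
proof -
  define C where "C = \<bar>c\<bar> * (1 + p) * exp (ln 2 / p + \<bar>s\<bar>)"
  have phi0_decay: "phi0 p (x + s) \<le> exp (ln 2 / p + \<bar>s\<bar>) * exp (- x)" if "x > 0" for x
  proof -
    have "phi0 p (x + s) \<le> exp (ln 2 / p - \<bar>x + s\<bar>)"
      by (rule phi0_le_exp[OF assms])
    also have "\<dots> \<le> exp (ln 2 / p + \<bar>s\<bar> + - x)"
      using that by simp
    also have "\<dots> = exp (ln 2 / p + \<bar>s\<bar>) * exp (- x)"
      by (rule exp_add)
    finally show ?thesis .
  qed
  have scaled_le: "\<bar>c * v\<bar> \<le> C * exp (- x)" if "\<bar>v\<bar> \<le> (1 + p) * phi0 p (x + s)" "x > 0" for v x
  proof -
    have "\<bar>c * v\<bar> \<le> \<bar>c\<bar> * ((1 + p) * phi0 p (x + s))"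
      unfolding abs_mult using that(1) by (rule mult_left_mono) simp
    also have "\<dots> \<le> \<bar>c\<bar> * ((1 + p) * (exp (ln 2 / p + \<bar>s\<bar>) * exp (- x)))"
      using phi0_decay[OF that(2)] assms by (intro mult_left_mono) auto
    finally show ?thesis
      unfolding C_def by (simp add: mult.assoc)
  qed
  have phi0_dominates: "phi0 p y \<le> (1 + p) * phi0 p y" for y
    using mult_nonneg_nonneg[of p "phi0 p y"] assms phi0_pos[of p y] by (simp add: distrib_right)
  have decay: "\<bar>c * phi0 p (x + s)\<bar> \<le> C * exp (- x) \<and> \<bar>c * phi0' p (x + s)\<bar> \<le> C * exp (- x)
      \<and> \<bar>c * phi0'' p (x + s)\<bar> \<le> C * exp (- x)" if "x > 0" for x
  proof -
    have "\<bar>phi0 p (x + s)\<bar> \<le> (1 + p) * phi0 p (x + s)"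
      using phi0_pos[of p "x + s"] phi0_dominates by simp
    moreover have "\<bar>phi0' p (x + s)\<bar> \<le> (1 + p) * phi0 p (x + s)"
      using abs_phi0'_le phi0_dominates by (rule order_trans)
    ultimately show ?thesis
      using assms by (intro conjI scaled_le[OF _ that] abs_phi0''_le) simp_all
  qed
  have "p \<noteq> 0"
    using assms by simp
  have deriv1: "((\<lambda>x. c * phi0 p (x + s)) has_real_derivative c * phi0' p (x + s)) (at x)"
    and deriv2: "((\<lambda>x. c * phi0' p (x + s)) has_real_derivative c * phi0'' p (x + s)) (at x)" for x
    by (intro has_real_derivative_scaled_shift has_real_derivative_phi0 has_real_derivative_phi0'
        \<open>p \<noteq> 0\<close>)+
  have cont: "continuous_on UNIV (\<lambda>x. c * phi0'' p (x + s))"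
    by (intro continuous_on_scaled_shift continuous_on_phi0'' \<open>p \<noteq> 0\<close>)
  show "H2_half (\<lambda>x. c * phi0 p (x + s))"
    and "weak_deriv (\<lambda>x. c * phi0 p (x + s)) (\<lambda>x. c * phi0' p (x + s))"
    and "H1_half (\<lambda>x. c * phi0' p (x + s))"
    using H2_half_if_exp_decay[OF deriv1 deriv2 cont decay] by blast+
qed

lemma solves_NLS_scaled_shifted_phi0:
  assumes "p > 0" and "\<alpha> > 0"
  shows "solves_NLS p \<alpha> (\<lambda>x. \<alpha> powr (-1/p) * phi0 p (x + s))"
  unfolding solves_NLS_def
proof (intro exI allI impI conjI)
  fix x :: real
  let ?c = "\<alpha> powr (-1/p)"
  have "p \<noteq> 0"
    using assms by simp
  show "((\<lambda>x. ?c * phi0 p (x + s)) has_real_derivative ?c * phi0' p (x + s)) (at x)"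
    and "((\<lambda>x. ?c * phi0' p (x + s)) has_real_derivative ?c * phi0'' p (x + s)) (at x)"
    by (intro has_real_derivative_scaled_shift has_real_derivative_phi0 has_real_derivative_phi0'
        \<open>p \<noteq> 0\<close>)+
  have "\<alpha>\<^sup>2 * \<bar>?c * phi0 p (x + s)\<bar> powr (2 * p) = \<alpha>\<^sup>2 * ?c powr (2 * p) * phi0 p (x + s) powr (2 * p)"
    using assms phi0_pos[of p "x + s"] by (simp add: powr_mult)
  also have "?c powr (2 * p) = \<alpha> powr (-1/p * (2 * p))"
    by (rule powr_powr)
  also have "-1/p * (2 * p) = - 2"
    using assms by simp
  also have "\<alpha>\<^sup>2 * \<alpha> powr - 2 = 1"
    using assms by (simp add: powr_minus powr_numeral)
  finally show "- (?c * phi0'' p (x + s)) + ?c * phi0 p (x + s)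
      - (p + 1) * \<alpha>\<^sup>2 * \<bar>?c * phi0 p (x + s)\<bar> powr (2 * p) * (?c * phi0 p (x + s)) = 0"
    unfolding phi0''_eq[OF \<open>p \<noteq> 0\<close>] by (simp add: algebra_simps)
qed

lemma H2_Gamma_of_continuous_edges:
  assumes "\<And>j. j \<in> {1..N} \<Longrightarrow> H2_half (\<Phi> j) \<and> weak_deriv (\<Phi> j) (\<Phi>' j) \<and> H1_half (\<Phi>' j)"
    and "\<And>j. j \<in> {1..N} \<Longrightarrow> continuous_on UNIV (\<Phi> j) \<and> continuous_on UNIV (\<Phi>' j)"
    and "\<And>j. j \<in> {1..N} \<Longrightarrow> \<alpha> j powr (1/p) * \<Phi> j 0 = v"
    and "(\<Sum>j=1..N. \<alpha> j powr (-1/p) * \<Phi>' j 0) = 0"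
  shows "H2_Gamma N p \<alpha> \<Phi>"
proof -
  have traces: "trace0 (\<Phi> j) (\<Phi> j 0)" "trace0 (\<Phi>' j) (\<Phi>' j 0)" if "j \<in> {1..N}" for j
    using assms(2)[OF that] trace0_continuous by blast+
  have "H1_Gamma N p \<alpha> \<Phi>"
    unfolding H1_Gamma_def
  proof (intro conjI)
    show "\<forall>j\<in>{1..N}. H1_half (\<Phi> j)"
      using assms(1) H2_half_imp_H1_half by blast
    show "\<exists>v. \<forall>j\<in>{1..N}. \<exists>c. trace0 (\<Phi> j) c \<and> \<alpha> j powr (1/p) * c = v"
      using traces(1) assms(3) by blast
  qed
  moreover have "\<exists>d c. (\<forall>j\<in>{1..N}. weak_deriv (\<Phi> j) (d j) \<and> H1_half (d j) \<and> trace0 (d j) (c j))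
      \<and> (\<Sum>j=1..N. \<alpha> j powr (-1/p) * c j) = 0"
    by (rule exI[of _ \<Phi>'], rule exI[of _ "\<lambda>j. \<Phi>' j 0"]) (use assms(1,4) traces(2) in blast)
  ultimately show ?thesis
    unfolding H2_Gamma_def using assms(1) by blast
qed

lemma sum_signed_balanced:
  fixes w :: "nat \<Rightarrow> real"
  assumes "K \<le> N" and "(\<Sum>j=1..K. w j) = (\<Sum>j=K+1..N. w j)"
  shows "(\<Sum>j=1..N. w j * (if j \<le> K then d else - d)) = 0"
proof -
  have "{1..N} = {1..K} \<union> {K+1..N}"
    using assms(1) by auto
  then have "(\<Sum>j=1..N. w j * (if j \<le> K then d else - d))
      = (\<Sum>j=1..K. w j * (if j \<le> K then d else - d)) + (\<Sum>j=K+1..N. w j * (if j \<le> K then d else - d))"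
    by (simp add: sum.union_disjoint)
  also have "\<dots> = (\<Sum>j=1..K. w j) * d - (\<Sum>j=K+1..N. w j) * d"
    by (simp add: sum_distrib_right sum_negf)
  finally show ?thesis
    using assms(2) by simp
qed

theorem lemma3p1:
  fixes p :: real and N K :: nat and \<alpha> :: "nat \<Rightarrow> real" and a :: real
  assumes "p > 0" and "N \<ge> 2" and "1 \<le> K" and "K \<le> N - 1"
    and "\<forall>j\<in>{1..N}. \<alpha> j > 0"
    and "(\<Sum>j=1..K. \<alpha> j powr (-2/p)) = (\<Sum>j=K+1..N. \<alpha> j powr (-2/p))"
  defines "\<Phi> \<equiv> (\<lambda>j x. if j \<le> K then \<alpha> j powr (-1/p) * phi0 p (x + a)
                          else \<alpha> j powr (-1/p) * phi0 p (x - a))"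
  shows "H2_Gamma N p \<alpha> \<Phi> \<and> (\<forall>j\<in>{1..N}. solves_NLS p (\<alpha> j) (\<Phi> j))"
proof -
  define \<sigma> where "\<sigma> j = (if j \<le> K then a else - a)" for j
  define \<Phi>' where "\<Phi>' j = (\<lambda>x. \<alpha> j powr (-1/p) * phi0' p (x + \<sigma> j))" for j
  have \<Phi>_eq: "\<Phi> j = (\<lambda>x. \<alpha> j powr (-1/p) * phi0 p (x + \<sigma> j))" for j
    unfolding \<Phi>_def \<sigma>_def by auto
  have "p \<noteq> 0" and \<alpha>_pos: "\<And>j. j \<in> {1..N} \<Longrightarrow> \<alpha> j > 0"
    using assms(1,5) by auto
  have edges: "H2_half (\<Phi> j) \<and> weak_deriv (\<Phi> j) (\<Phi>' j) \<and> H1_half (\<Phi>' j)" for j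
    unfolding \<Phi>_eq \<Phi>'_def using scaled_shifted_phi0_H2_half[OF assms(1)] by blast
  have continuous: "continuous_on UNIV (\<Phi> j) \<and> continuous_on UNIV (\<Phi>' j)" for j
    unfolding \<Phi>_eq \<Phi>'_def
    by (intro conjI continuous_on_scaled_shift continuous_on_phi0 continuous_on_phi0' \<open>p \<noteq> 0\<close>)
  have "\<alpha> j powr (1/p) * \<alpha> j powr (-1/p) = 1" "\<alpha> j powr (-1/p) * \<alpha> j powr (-1/p) = \<alpha> j powr (-2/p)"
    if "j \<in> {1..N}" for j
    using \<alpha>_pos[OF that] by (simp_all add: powr_add[symmetric])
  then have vertex: "\<alpha> j powr (1/p) * \<Phi> j 0 = phi0 p a"
    and slope: "\<alpha> j powr (-1/p) * \<Phi>' j 0 = \<alpha> j powr (-2/p) * (if j \<le> K then phi0' p a else - phi0' p a)"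
    if "j \<in> {1..N}" for j
    using that unfolding \<Phi>_eq \<Phi>'_def \<sigma>_def by (simp_all add: phi0_minus phi0'_minus mult.assoc[symmetric])
  have "(\<Sum>j=1..N. \<alpha> j powr (-1/p) * \<Phi>' j 0)
      = (\<Sum>j=1..N. \<alpha> j powr (-2/p) * (if j \<le> K then phi0' p a else - phi0' p a))"
    using slope by (intro sum.cong) auto
  also have "\<dots> = 0"
    using assms(4) by (intro sum_signed_balanced assms(6)) simp
  finally have "H2_Gamma N p \<alpha> \<Phi>"
    by (rule H2_Gamma_of_continuous_edges[where v="phi0 p a", rotated 3])
       (simp_all add: edges continuous vertex)
  moreover have "solves_NLS p (\<alpha> j) (\<Phi> j)" if "j \<in> {1..N}" for j
    unfolding \<Phi>_eq by (rule solves_NLS_scaled_shifted_phi0[OF assms(1) \<alpha>_pos[OF that]])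
  ultimately show ?thesis
    by blast
qed

end
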